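(* Let $d\ge2$ and $c\ge1$, and let $\mathcal{O}$ be a $c$-fat collection of convex objects in $\mathbb{R}^d$ which is closed under rotations and translations. Then $\mathcal{O}$ is $cd\sqrt d$-globally fat.
   Context: An object in $\mathbb{R}^d$ is a path-connected compact set; its size is the side length of its smallest enclosing axis-aligned hypercube. A collection is $c$-fat if for every $r\in\mathbb{R}$ and every closed axis-aligned box $R$ of side length $r$ there are at most $c$ pairwise non-intersecting objects of the collection of size at least $r$ intersecting $R$. An object $O$ is $k$-globally fat if there are $d$-dimensional balls $B_{in}\subseteq O\subseteq B_{out}$ with radii $R_{in},R_{out}$ satisfying $R_{out}\le kR_{in}$; a collection is $k$-globally fat if every member is. *)

theory Defs
  imports "HOL-Analysis.Analysis"
begin

text \<open>Objects live in \<open>real ^ 'n\<close>, i.e. R^d with d = CARD('n).\<close>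

definition cube :: "real ^ 'n \<Rightarrow> real \<Rightarrow> (real ^ 'n) set" where
  "cube a r = cbox a (a + r *\<^sub>R One)"

definition is_object :: "(real ^ 'n) set \<Rightarrow> bool" where
  "is_object X \<longleftrightarrow> X \<noteq> {} \<and> compact X \<and> path_connected X"

definition obj_size :: "(real ^ 'n) set \<Rightarrow> real" where
  "obj_size X = Inf {s. 0 \<le> s \<and> (\<exists>a. X \<subseteq> cube a s)}"

definition c_fat :: "real \<Rightarrow> (real ^ 'n) set set \<Rightarrow> bool" where
  "c_fat c \<X> \<longleftrightarrow>
     (\<forall>r::real. \<forall>a::real ^ 'n. \<forall>S. S \<subseteq> \<X> \<and> pairwise disjnt S \<and>
        (\<forall>X\<in>S. obj_size X \<ge> r \<and> X \<inter> cube a r \<noteq> {})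
        \<longrightarrow> finite S \<and> real (card S) \<le> c)"

definition globally_fat_obj :: "real \<Rightarrow> (real ^ 'n) set \<Rightarrow> bool" where
  "globally_fat_obj k X \<longleftrightarrow>
     (\<exists>x_in R_in x_out R_out. 0 \<le> R_in \<and> cball x_in R_in \<subseteq> X \<and> X \<subseteq> cball x_out R_out
        \<and> R_out \<le> k * R_in)"

definition globally_fat :: "real \<Rightarrow> (real ^ 'n) set set \<Rightarrow> bool" where
  "globally_fat k \<X> \<longleftrightarrow> (\<forall>X\<in>\<X>. globally_fat_obj k X)"

definition rotation :: "(real ^ 'n \<Rightarrow> real ^ 'n) \<Rightarrow> bool" where
  "rotation f \<longleftrightarrow> orthogonal_transformation f \<and> det (matrix f) = 1"

end

theory Submission
  imports Defs
begin

text \<open>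
  Let s be the largest width of X along a coordinate axis, so that X lies in a cube of side s
  and, by translation invariance, every translate of X has size at least s. If X had no
  chord of length s/c parallel to some axis, then a suitable family of more than c translates
  of X along that axis would be pairwise disjoint, all meet one cube of side s, and all have
  size at least s, contradicting c-fatness. Averaging one such chord per axis, convexity puts
  a cube of side s/(c d) and hence a ball of radius s/(2 c d) inside X, while X lies in the ball
  of radius s \<surd>d / 2 around the centre of its bounding cube.
\<close>

text \<open>\<open>One\<close> abbreviates \<open>\<Sum>Basis\<close>, so this is the form in which its components reach the simplifier.\<close>

lemma sum_Basis_component_cart [simp]: "(\<Sum>x\<in>Basis. (x::real^'n) $ i) = 1"
proof -
  have "(One::real^'n) $ i = 1" by (metis one_index Cart_1)
  then show ?thesis by simp
qed

lemma mem_cube: "x \<in> cube a r \<longleftrightarrow> (\<forall>i. a$i \<le> x$i \<and> x$i \<le> a$i + r)"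
  unfolding cube_def mem_box_cart by simp

lemma bounded_subset_cube:
  fixes Y :: "(real^'n) set"
  assumes "bounded Y"
  obtains a r where "0 \<le> r" "Y \<subseteq> cube a r"
proof -
  obtain B where "B > 0" and B: "\<forall>y\<in>Y. norm y \<le> B"
    using assms bounded_pos by blast
  have "Y \<subseteq> cube (- B *\<^sub>R One) (2 * B)"
  proof
    fix y assume "y \<in> Y"
    then have y_bound: "\<bar>y$i\<bar> \<le> B" for i
      using B component_le_norm_cart order_trans by blast
    have "- B \<le> y$i \<and> y$i \<le> B" for i
      using y_bound[of i] by arith
    then show "y \<in> cube (- B *\<^sub>R One) (2 * B)"
      by (simp add: mem_cube)
  qed
  with \<open>B > 0\<close> show thesis by (intro that) auto
qed

lemma component_diff_le_obj_size:
  fixes Y :: "(real^'n) set"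
  assumes "bounded Y" "x \<in> Y" "y \<in> Y"
  shows "x$i - y$i \<le> obj_size Y"
  unfolding obj_size_def
proof (rule cInf_greatest)
  obtain a r where "0 \<le> r" "Y \<subseteq> cube a r"
    using bounded_subset_cube[OF assms(1)] .
  then show "{s. 0 \<le> s \<and> (\<exists>a. Y \<subseteq> cube a s)} \<noteq> {}" by blast
next
  fix s assume "s \<in> {s. 0 \<le> s \<and> (\<exists>a. Y \<subseteq> cube a s)}"
  then obtain a where "Y \<subseteq> cube a s" by blast
  with assms(2,3) have "x \<in> cube a s" "y \<in> cube a s" by blast+
  then have "x$i \<le> a$i + s" "a$i \<le> y$i"
    by (simp_all add: mem_cube)
  then show "x$i - y$i \<le> s" by linarith
qed

lemma translation_mem_cube_iff: "v + x \<in> cube a r \<longleftrightarrow> x \<in> cube (a - v) r"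
  unfolding mem_cube by (simp add: algebra_simps)

lemma translation_subset_cube_iff:
  "(\<lambda>x. v + x) ` X \<subseteq> cube a r \<longleftrightarrow> X \<subseteq> cube (a - v) r"
  by (auto simp: translation_mem_cube_iff)

lemma obj_size_translation: "obj_size ((\<lambda>x. v + x) ` X) = obj_size X"
proof -
  have "(\<exists>a. (\<lambda>x. v + x) ` X \<subseteq> cube a r) \<longleftrightarrow> (\<exists>a. X \<subseteq> cube a r)" for r
    unfolding translation_subset_cube_iff by (metis add_diff_cancel_right')
  then show ?thesis
    unfolding obj_size_def by simp
qed

lemma bounding_cube_le_obj_size:
  fixes X :: "(real^'n) set"
  assumes "compact X" "X \<noteq> {}"
  obtains a s where "0 \<le> s" "X \<subseteq> cube a s" "s \<le> obj_size X"
proof -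
  define lo where "lo i = Inf ((\<lambda>x. x$i) ` X)" for i
  define hi where "hi i = Sup ((\<lambda>x. x$i) ` X)" for i
  have cpt: "compact ((\<lambda>x. x$i) ` X)" for i
    by (intro compact_continuous_image continuous_intros assms(1))
  then have bdd: "bdd_below ((\<lambda>x. x$i) ` X)" "bdd_above ((\<lambda>x. x$i) ` X)" for i
    by (simp_all add: bounded_imp_bdd_below bounded_imp_bdd_above compact_imp_bounded)
  have lo: "lo i \<in> (\<lambda>x. x$i) ` X" "lo i \<le> x$i" if "x \<in> X" for i x
    unfolding lo_def using that assms(2) cpt bdd
    by (simp_all add: closed_contains_Inf compact_imp_closed cInf_lower)
  have hi: "hi i \<in> (\<lambda>x. x$i) ` X" "x$i \<le> hi i" if "x \<in> X" for i x
    unfolding hi_def using that assms(2) cpt bdd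
    by (simp_all add: closed_contains_Sup compact_imp_closed cSup_upper)
  define s where "s = Max (range (\<lambda>i. hi i - lo i))"
  have "s \<in> range (\<lambda>i. hi i - lo i)"
    unfolding s_def by (rule Max_in) auto
  then obtain i0 where s_eq: "s = hi i0 - lo i0" by blast
  have width_le: "hi i - lo i \<le> s" for i
    unfolding s_def by (rule Max_ge) auto
  obtain p where "p \<in> X" using assms(2) by blast
  show thesis
  proof
    show "0 \<le> s" using s_eq lo(2)[OF \<open>p \<in> X\<close>, of i0] hi(2)[OF \<open>p \<in> X\<close>, of i0] by linarith
    show "X \<subseteq> cube (\<chi> i. lo i) s"
    proof
      fix x assume "x \<in> X"
      have "lo i \<le> x$i \<and> x$i \<le> lo i + s" for i
        using lo(2)[OF \<open>x \<in> X\<close>, of i] hi(2)[OF \<open>x \<in> X\<close>, of i] width_le[of i] by linarith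
      then show "x \<in> cube (\<chi> i. lo i) s"
        by (simp add: mem_cube)
    qed
    obtain x y where "x \<in> X" "y \<in> X" "hi i0 = x$i0" "lo i0 = y$i0"
      using lo(1)[OF \<open>p \<in> X\<close>] hi(1)[OF \<open>p \<in> X\<close>] by blast
    then show "s \<le> obj_size X"
      using component_diff_le_obj_size[OF compact_imp_bounded[OF assms(1)]] s_eq by simp
  qed
qed

lemma cball_subset_cube:
  fixes a :: "real^'n"
  shows "cball (a + (r/2) *\<^sub>R One) (r/2) \<subseteq> cube a r"
proof
  fix y :: "real^'n" assume "y \<in> cball (a + (r/2) *\<^sub>R One) (r/2)"
  then have close: "\<bar>y$i - (a$i + r/2)\<bar> \<le> r/2" for i
    using component_le_norm_cart[of "y - (a + (r/2) *\<^sub>R One)" i]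
    by (simp add: dist_norm norm_minus_commute)
  have "a$i \<le> y$i \<and> y$i \<le> a$i + r" for i
    using close[of i] by arith
  then show "y \<in> cube a r"
    by (simp add: mem_cube)
qed

lemma cube_subset_cball:
  fixes a :: "real^'n"
  assumes "0 \<le> r"
  shows "cube a r \<subseteq> cball (a + (r/2) *\<^sub>R One) (sqrt CARD('n) * r / 2)"
proof
  fix x :: "real^'n" assume "x \<in> cube a r"
  then have x: "a$i \<le> x$i \<and> x$i \<le> a$i + r" for i
    unfolding mem_cube by blast
  have "dist ((a + (r/2) *\<^sub>R One) $ i) (x$i) \<le> r/2" for i
  proof -
    have "(a + (r/2) *\<^sub>R One) $ i = a$i + r/2" by simp
    with x[of i] show ?thesis unfolding dist_real_def by arith
  qed
  then have "dist (a + (r/2) *\<^sub>R One) x \<le> L2_set (\<lambda>i. r/2) (UNIV::'n set)"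
    unfolding dist_vec_def by (intro L2_set_mono) auto
  then show "x \<in> cball (a + (r/2) *\<^sub>R One) (sqrt CARD('n) * r / 2)"
    using assms by (simp add: L2_set_constant)
qed

lemma convex_mem_on_segment:
  fixes X :: "'a::real_vector set"
  assumes "convex X" "p \<in> X" "p + l *\<^sub>R e \<in> X" "0 \<le> t" "t \<le> l"
  shows "p + t *\<^sub>R e \<in> X"
proof (cases "l = 0")
  case True
  with assms show ?thesis by simp
next
  case False
  with assms have "0 < l" by linarith
  then have "p + t *\<^sub>R e = (1 - t/l) *\<^sub>R p + (t/l) *\<^sub>R (p + l *\<^sub>R e)"
    by (simp add: algebra_simps)
  also have "\<dots> \<in> X"
    using convexD[OF assms(1-3)] assms(4,5) \<open>0 < l\<close> by simp
  finally show ?thesis .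
qed

lemma cube_subset_convex_of_axis_chords:
  fixes X :: "(real^'n) set"
  assumes "convex X" and P: "\<And>i. P i \<in> X" "\<And>i. P i + l *\<^sub>R axis i 1 \<in> X"
  shows "cube ((1 / real CARD('n)) *\<^sub>R (\<Sum>i\<in>UNIV. P i)) (l / real CARD('n)) \<subseteq> X"
proof -
  define d where "d = real CARD('n)"
  define q where "q = (1 / d) *\<^sub>R (\<Sum>i\<in>UNIV. P i)"
  have "d > 0" unfolding d_def by simp
  have "cube q (l / d) \<subseteq> X"
  proof
    fix y assume "y \<in> cube q (l / d)"
    then have y_bounds: "q$i \<le> y$i \<and> y$i \<le> q$i + l / d" for i
      unfolding mem_cube by blast
    have y: "0 \<le> d * (y$i - q$i)" "d * (y$i - q$i) \<le> l" for i
    proof -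
      show "0 \<le> d * (y$i - q$i)" using y_bounds[of i] \<open>d > 0\<close> by simp
      have "y$i - q$i \<le> l / d" using y_bounds[of i] by linarith
      then show "d * (y$i - q$i) \<le> l" using \<open>d > 0\<close> by (simp add: pos_le_divide_eq mult.commute)
    qed
    define W where "W i = P i + (d * (y$i - q$i)) *\<^sub>R axis i 1" for i
    have "W i \<in> X" for i
      unfolding W_def using convex_mem_on_segment[OF assms(1) P(1,2) y] .
    then have "(\<Sum>i\<in>UNIV. (1/d) *\<^sub>R W i) \<in> X"
      using \<open>d > 0\<close> by (intro convex_sum[OF finite assms(1)]) (auto simp: d_def)
    moreover have "(\<Sum>i\<in>UNIV. (1/d) *\<^sub>R W i) = q + (\<Sum>i\<in>UNIV. (y - q)$i *\<^sub>R axis i 1)"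
      using \<open>d > 0\<close>
      by (simp add: W_def q_def scaleR_add_right sum.distrib scaleR_sum_right)
    moreover have "(\<Sum>i\<in>UNIV. (y - q)$i *\<^sub>R axis i 1) = y - q"
      using basis_expansion[of "y - q"] by (simp add: scalar_mult_eq_scaleR)
    ultimately show "y \<in> X" by simp
  qed
  then show ?thesis
    by (simp add: q_def d_def)
qed

lemma closed_convex_ray_gap:
  fixes D :: "'a::real_normed_vector set"
  assumes "convex D" "closed D" "0 \<in> D" "l *\<^sub>R e \<notin> D" "0 < l"
  obtains \<delta> where "0 < \<delta>" "\<delta> < l" "\<And>t. \<delta> \<le> t \<Longrightarrow> t *\<^sub>R e \<notin> D"
proof -
  have "open ((\<lambda>t::real. t *\<^sub>R e) -` (- D))"
    using assms(2) by (intro continuous_open_vimage continuous_intros) auto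
  then obtain \<epsilon> where "\<epsilon> > 0" and \<epsilon>: "\<And>t. dist t l < \<epsilon> \<Longrightarrow> t *\<^sub>R e \<notin> D"
    using assms(4) unfolding open_dist by auto
  define \<delta> where "\<delta> = max (l/2) (l - \<epsilon>/2)"
  have "0 < \<delta>" "\<delta> < l" using \<open>\<epsilon> > 0\<close> assms(5) by (auto simp: \<delta>_def)
  moreover have "\<delta> *\<^sub>R e \<notin> D"
    using \<epsilon>[of \<delta>] \<open>\<epsilon> > 0\<close> \<open>\<delta> < l\<close> by (auto simp: \<delta>_def dist_real_def)
  \<comment> \<open>D is star-shaped about 0, so it cannot contain a point of the ray beyond \<delta> e.\<close>
  then have "t *\<^sub>R e \<notin> D" if "\<delta> \<le> t" for t
    using convex_mem_on_segment[OF assms(1,3), of t e \<delta>] that \<open>0 < \<delta>\<close> by auto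
  ultimately show thesis by (rule that)
qed

lemma disjnt_translates_along_ray:
  fixes X :: "'a::real_vector set"
  assumes "0 < \<delta>" and no_diff: "\<And>t. \<delta> \<le> t \<Longrightarrow> t *\<^sub>R e \<notin> {x - y |x y. x \<in> X \<and> y \<in> X}"
    and "j \<noteq> k"
  shows "disjnt ((\<lambda>x. (real j * \<delta>) *\<^sub>R e + x) ` X) ((\<lambda>x. (real k * \<delta>) *\<^sub>R e + x) ` X)"
  unfolding disjnt_def
proof (rule ccontr)
  assume "(\<lambda>x. (real j * \<delta>) *\<^sub>R e + x) ` X \<inter> (\<lambda>x. (real k * \<delta>) *\<^sub>R e + x) ` X \<noteq> {}"
  then obtain x y where "x \<in> X" "y \<in> X" and eq: "(real j * \<delta>) *\<^sub>R e + x = (real k * \<delta>) *\<^sub>R e + y"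
    by blast
  from eq have "x - y = ((real k - real j) * \<delta>) *\<^sub>R e" "y - x = ((real j - real k) * \<delta>) *\<^sub>R e"
    by (simp_all add: algebra_simps)
  moreover have "1 \<le> real k - real j \<or> 1 \<le> real j - real k"
    using \<open>j \<noteq> k\<close> by linarith
  then have "\<delta> \<le> (real k - real j) * \<delta> \<or> \<delta> \<le> (real j - real k) * \<delta>"
    using mult_right_mono[of 1 "real k - real j" \<delta>] mult_right_mono[of 1 "real j - real k" \<delta>]
      \<open>0 < \<delta>\<close> by auto
  ultimately show False
    using no_diff \<open>x \<in> X\<close> \<open>y \<in> X\<close> by fastforce
qed

lemma c_fat_bounds_disjoint_axis_translates:
  fixes X :: "(real^'n) set"
  assumes fat: "c_fat c \<X>" and tr: "\<forall>X\<in>\<X>. \<forall>v. (\<lambda>x. v + x) ` X \<in> \<X>"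
    and X: "X \<in> \<X>" "p \<in> X" "r \<le> obj_size X"
    and steps: "0 \<le> \<delta>" "\<And>j. j < N \<Longrightarrow> real j * \<delta> \<le> r"
    and disj: "\<And>j k. j \<noteq> k \<Longrightarrow>
      disjnt ((\<lambda>x. (real j * \<delta>) *\<^sub>R axis i 1 + x) ` X) ((\<lambda>x. (real k * \<delta>) *\<^sub>R axis i 1 + x) ` X)"
  shows "real N \<le> c"
proof -
  define Y where "Y j = (\<lambda>x. (real j * \<delta>) *\<^sub>R axis i 1 + x) ` X" for j
  have "inj_on Y {..<N}"
  proof (rule inj_onI)
    fix j k assume "Y j = Y k"
    with disj[of j k] X(2) show "j = k"
      unfolding Y_def disjnt_def by blast
  qed
  then have "card (Y ` {..<N}) = N"
    by (simp add: card_image)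
  moreover have "real (card (Y ` {..<N})) \<le> c"
  proof (rule fat[unfolded c_fat_def, rule_format, of _ r p, THEN conjunct2], intro conjI ballI)
    show "Y ` {..<N} \<subseteq> \<X>"
      unfolding Y_def using tr X(1) by blast
    show "pairwise disjnt (Y ` {..<N})"
      unfolding Y_def by (intro pairwise_imageI) (use disj in blast)
    fix A assume "A \<in> Y ` {..<N}"
    then obtain j where "j < N" "A = Y j" by blast
    then show "r \<le> obj_size A"
      using X(3) by (simp add: Y_def obj_size_translation)
    have "0 \<le> real j * \<delta>" "real j * \<delta> \<le> r"
      using steps \<open>j < N\<close> by simp_all
    then have "(real j * \<delta>) *\<^sub>R axis i 1 + p \<in> cube p r"
      by (auto simp: mem_cube axis_def)
    then show "A \<inter> cube p r \<noteq> {}"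
      using \<open>A = Y j\<close> X(2) unfolding Y_def by blast
  qed
  ultimately show ?thesis by simp
qed

lemma nat_floor_divide_steps:
  fixes r \<delta> :: real
  assumes "0 < \<delta>" "0 \<le> r"
  shows "r/\<delta> < real (nat \<lfloor>r/\<delta>\<rfloor> + 1)"
    and "j < nat \<lfloor>r/\<delta>\<rfloor> + 1 \<Longrightarrow> real j * \<delta> \<le> r"
proof -
  show "r/\<delta> < real (nat \<lfloor>r/\<delta>\<rfloor> + 1)"
    using assms by simp (use real_of_int_floor_add_one_gt[of "r/\<delta>"] in linarith)
  assume "j < nat \<lfloor>r/\<delta>\<rfloor> + 1"
  then have "real j \<le> real (nat \<lfloor>r/\<delta>\<rfloor>)"
    by simp
  also have "\<dots> \<le> r/\<delta>"
    using assms by (intro of_nat_floor) simp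
  finally show "real j * \<delta> \<le> r"
    using assms(1) by (simp add: pos_le_divide_eq)
qed

lemma c_fat_axis_chord:
  fixes X :: "(real^'n) set"
  assumes fat: "c_fat c \<X>" and tr: "\<forall>X\<in>\<X>. \<forall>v. (\<lambda>x. v + x) ` X \<in> \<X>"
    and X: "X \<in> \<X>" "compact X" "convex X" "X \<noteq> {}"
    and "0 < c" "0 \<le> r" "r \<le> obj_size X"
  shows "\<exists>x\<in>X. x + (r/c) *\<^sub>R axis i 1 \<in> X"
proof (rule ccontr)
  assume no_chord: "\<not> ?thesis"
  define D where "D = {x - y |x y. x \<in> X \<and> y \<in> X}"
  obtain p where "p \<in> X" using X(4) by blast
  have "r \<noteq> 0"
  proof
    assume "r = 0"
    with no_chord \<open>p \<in> X\<close> show False by simp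
  qed
  with \<open>0 \<le> r\<close> have "0 < r" by simp
  have "compact D" unfolding D_def using compact_differences X(2) by blast
  moreover have "convex D"
  proof -
    have "D = (\<Union>x\<in>X. \<Union>y\<in>X. {x - y})" unfolding D_def by blast
    with convex_differences[OF X(3) X(3)] show ?thesis by simp
  qed
  moreover have "0 \<in> D" unfolding D_def using \<open>p \<in> X\<close> by force
  moreover have "(r/c) *\<^sub>R axis i 1 \<notin> D"
    using no_chord unfolding D_def by (force simp: algebra_simps)
  ultimately obtain \<delta> where "0 < \<delta>" "\<delta> < r/c" and gap: "\<And>t. \<delta> \<le> t \<Longrightarrow> t *\<^sub>R axis i 1 \<notin> D"
    using closed_convex_ray_gap compact_imp_closed \<open>0 < r\<close> \<open>0 < c\<close> by (metis divide_pos_pos)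
  define N where "N = nat \<lfloor>r/\<delta>\<rfloor> + 1"
  have "\<And>j. j < N \<Longrightarrow> real j * \<delta> \<le> r"
    using nat_floor_divide_steps(2)[OF \<open>0 < \<delta>\<close> \<open>0 \<le> r\<close>] by (simp add: N_def)
  then have "real N \<le> c"
    using \<open>0 < \<delta>\<close> disjnt_translates_along_ray[OF \<open>0 < \<delta>\<close> gap[unfolded D_def]]
    by (intro c_fat_bounds_disjoint_axis_translates[OF fat tr X(1) \<open>p \<in> X\<close> \<open>r \<le> obj_size X\<close>,
          where \<delta> = \<delta> and i = i]) auto
  moreover have "c < r/\<delta>"
    using \<open>\<delta> < r/c\<close> \<open>0 < \<delta>\<close> \<open>0 < c\<close> by (simp add: field_simps)
  moreover have "r/\<delta> < real N"
    using nat_floor_divide_steps(1)[OF \<open>0 < \<delta>\<close> \<open>0 \<le> r\<close>] by (simp add: N_def)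
  ultimately show False by simp
qed

theorem lemma3p8:
  fixes \<X> :: "(real ^ 'n) set set" and c :: real
  assumes "CARD('n) \<ge> 2"
    and "c \<ge> 1"
    and "\<forall>X\<in>\<X>. is_object X \<and> convex X"
    and "c_fat c \<X>"
    and "\<forall>X\<in>\<X>. \<forall>f. rotation f \<longrightarrow> f ` X \<in> \<X>"
    and "\<forall>X\<in>\<X>. \<forall>v. (\<lambda>x. v + x) ` X \<in> \<X>"
  shows "globally_fat (c * real CARD('n) * sqrt (real CARD('n))) \<X>"
  unfolding globally_fat_def
proof
  fix X assume "X \<in> \<X>"
  then have X: "compact X" "convex X" "X \<noteq> {}"
    using assms(3) by (auto simp: is_object_def)
  obtain a s where "0 \<le> s" "X \<subseteq> cube a s" "s \<le> obj_size X"
    using bounding_cube_le_obj_size[OF X(1,3)] .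
  have "0 < c" using assms(2) by simp
  obtain P where P: "\<And>i. P i \<in> X" "\<And>i. P i + (s/c) *\<^sub>R axis i 1 \<in> X"
    using c_fat_axis_chord[OF assms(4,6) \<open>X \<in> \<X>\<close> X \<open>0 < c\<close> \<open>0 \<le> s\<close> \<open>s \<le> obj_size X\<close>] by metis
  define d where "d = real CARD('n)"
  define q where "q = (1 / d) *\<^sub>R (\<Sum>i\<in>UNIV. P i)"
  define \<rho> where "\<rho> = s / c / d / 2"
  have "cball (q + \<rho> *\<^sub>R One) \<rho> \<subseteq> X"
    using cball_subset_cube[of q "s / c / d"] cube_subset_convex_of_axis_chords[OF X(2) P]
    by (simp add: \<rho>_def q_def d_def)
  moreover have "X \<subseteq> cball (a + (s/2) *\<^sub>R One) (sqrt d * s / 2)"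
    using cube_subset_cball[OF \<open>0 \<le> s\<close>] \<open>X \<subseteq> cube a s\<close> by (auto simp: d_def)
  moreover have "0 \<le> \<rho>" "sqrt d * s / 2 = c * d * sqrt d * \<rho>"
    using \<open>0 \<le> s\<close> \<open>0 < c\<close> by (simp_all add: \<rho>_def d_def)
  ultimately show "globally_fat_obj (c * real CARD('n) * sqrt (real CARD('n))) X"
    unfolding globally_fat_obj_def d_def by (metis order_refl)
qed

end
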